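(* Let $I$ be a $b$-nested common interval of $\mathcal{P}$ with domain $D(I)=\{x_1,\ldots,x_r\}$, where $r\geq 1$. Then for every $i$ with $1\leq i\leq r$, the interval $Int(x_i)$ is either $b$-small or a $b$-nested common interval.
   Context: Let $n\geq 1$, $K\geq 1$ and let $\mathcal{P}=\{P_1,\ldots,P_K\}$ be permutations of $\{1,\ldots,n\}$ with $P_1=(1,2,\ldots,n)$. For integers $i\leq j$ write $(i..j)=\{i,i+1,\ldots,j\}$. A common interval of $\mathcal{P}$ is a set of integers occupying consecutive positions in every $P_k$; all common intervals have the form $(i..j)$, and singletons and $(1..n)$ are common. Fix a positive integer $b$. A common interval $I$ is $b$-small if $|I|\leq b$ and $b$-large otherwise. It is $b$-nested if $|I|=1$ or $I$ strictly contains a $b$-nested common interval $J$ with $|J|\geq |I|-b$ (recursive definition on size). Two intervals $(i..j)$, $(k..l)$ overlap if $i<k\leq j<l$ or $k<i\leq l<j$. A common interval is strong if it overlaps no other common interval. The PQ-tree $T$ of $\mathcal{P}$: its nodes are the strong common intervals ($Int(x)$ denotes the interval of node $x$), the root is $(1..n)$, the leaves are the singletons, and the parent of $y$ is the node $x$ with $Int(x)$ the smallest strong common interval strictly containing $Int(y)$. A node $x$ with children set $D$ is a $P$-node if no union $\bigcup_{z\in D'}Int(z)$ with $D'\subset D$, $2\leq|D'|<|D|$, is a common interval; otherwise it is a $Q$-node, and its children $y_1,\ldots,y_r$ are ordered so that $\max Int(y_i)+1=\min Int(y_{i+1})$. It is known that a set $I$ is a common interval iff either $I=Int(x)$ for a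 node $x$, or there is a unique $Q$-node $z$ such that $I$ is the union of the intervals of a run of consecutive children of $z$. The domain $D(I)$ of a common interval $I$ is: the set of children of $x$ if $I=Int(x)$ is strong; otherwise the set $\{x_l,\ldots,x_r\}$ of consecutive children of the $Q$-node $z$ whose intervals have union $I$. *)

theory Defs
  imports Main
begin

definition perm_family :: "nat \<Rightarrow> nat list list \<Rightarrow> bool" where
  "perm_family n Ps \<longleftrightarrow> n \<ge> 1 \<and> length Ps \<ge> 1 \<and>
     hd Ps = [1..<n+1] \<and> (\<forall>P\<in>set Ps. distinct P \<and> set P = {1..n})"

definition positions :: "nat list \<Rightarrow> nat set \<Rightarrow> nat set" where
  "positions P I = {i. i < length P \<and> P ! i \<in> I}"

definition common :: "nat \<Rightarrow> nat list list \<Rightarrow> nat set \<Rightarrow> bool" where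
  "common n Ps I \<longleftrightarrow> I \<noteq> {} \<and> I \<subseteq> {1..n} \<and>
     (\<forall>P\<in>set Ps. \<exists>a c. positions P I = {a..c})"

definition overlap :: "nat set \<Rightarrow> nat set \<Rightarrow> bool" where
  "overlap I J \<longleftrightarrow>
     (Min I < Min J \<and> Min J \<le> Max I \<and> Max I < Max J) \<or>
     (Min J < Min I \<and> Min I \<le> Max J \<and> Max J < Max I)"

definition strong :: "nat \<Rightarrow> nat list list \<Rightarrow> nat set \<Rightarrow> bool" where
  "strong n Ps I \<longleftrightarrow> common n Ps I \<and> (\<forall>J. common n Ps J \<longrightarrow> \<not> overlap I J)"

text \<open>Nodes of the PQ-tree are identified with their (strong) intervals.
  y is a child of x iff x is the smallest strong interval strictly containing y.\<close>
definition children :: "nat \<Rightarrow> nat list list \<Rightarrow> nat set \<Rightarrow> nat set set" where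
  "children n Ps x = {y. strong n Ps y \<and> y \<subset> x \<and>
      (\<forall>w. strong n Ps w \<and> y \<subset> w \<longrightarrow> x \<subseteq> w)}"

definition P_node :: "nat \<Rightarrow> nat list list \<Rightarrow> nat set \<Rightarrow> bool" where
  "P_node n Ps x \<longleftrightarrow> strong n Ps x \<and>
     (\<forall>D'. D' \<subset> children n Ps x \<and> 2 \<le> card D' \<and> card D' < card (children n Ps x)
        \<longrightarrow> \<not> common n Ps (\<Union>D'))"

definition Q_node :: "nat \<Rightarrow> nat list list \<Rightarrow> nat set \<Rightarrow> bool" where
  "Q_node n Ps x \<longleftrightarrow> strong n Ps x \<and> \<not> P_node n Ps x"

text \<open>D is a run of consecutive children of z (children ordered by position).\<close>
definition consecutive_children :: "nat \<Rightarrow> nat list list \<Rightarrow> nat set \<Rightarrow> nat set set \<Rightarrow> bool" where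
  "consecutive_children n Ps z D \<longleftrightarrow> D \<noteq> {} \<and> D \<subseteq> children n Ps z \<and>
     (\<forall>y1\<in>D. \<forall>y2\<in>D. \<forall>y\<in>children n Ps z.
        Min y1 \<le> Min y \<and> Min y \<le> Min y2 \<longrightarrow> y \<in> D)"

definition domain :: "nat \<Rightarrow> nat list list \<Rightarrow> nat set \<Rightarrow> nat set set" where
  "domain n Ps I = (if strong n Ps I then children n Ps I
     else (THE D. \<exists>z. Q_node n Ps z \<and> consecutive_children n Ps z D \<and> \<Union>D = I))"

inductive nested :: "nat \<Rightarrow> nat list list \<Rightarrow> nat \<Rightarrow> nat set \<Rightarrow> bool" where
  single: "common n Ps I \<Longrightarrow> card I = 1 \<Longrightarrow> nested n Ps b I"
| step: "common n Ps I \<Longrightarrow> nested n Ps b J \<Longrightarrow> J \<subset> I \<Longrightarrow> card I \<le> card J + b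
          \<Longrightarrow> nested n Ps b I"

definition small :: "nat \<Rightarrow> nat set \<Rightarrow> bool" where
  "small b I \<longleftrightarrow> card I \<le> b"

end

theory Submission
  imports Defs
begin

text \<open>Every member of the domain of I is a strong interval contained in I. If J is b-nested,
  built along a chain J1 \<subset> J2 \<subset> \<dots> \<subset> J in which each step adds at most b elements,
  then a strong interval x \<subseteq> J with more than b elements is b-nested as well: inside the
  first member of the chain that contains it, x cannot be disjoint from the preceding one
  (too few elements are left over), so, being strong, it lies between two consecutive
  members and is itself a nesting step. For non-strong I, that the domain consists of
  strong subintervals of I rests on the uniqueness of the Q-node and of the run of its
  children whose union is I.\<close>

lemma common_finite: "common n Ps J \<Longrightarrow> finite J"
  unfolding common_def using finite_subset by blast

lemma common_nonempty: "common n Ps J \<Longrightarrow> J \<noteq> {}"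
  unfolding common_def by blast

lemma strong_imp_common: "strong n Ps x \<Longrightarrow> common n Ps x"
  unfolding strong_def by blast

lemma common_eq_atLeastAtMost:
  assumes pf: "perm_family n Ps" and J: "common n Ps J"
  obtains a c where "a \<le> c" and "J = {a..c}"
proof -
  have "hd Ps \<in> set Ps" using pf unfolding perm_family_def by (cases Ps) auto
  then obtain a c where ac: "positions [1..<n+1] J = {a..c}"
    using J pf unfolding common_def perm_family_def by metis
  have J_range: "J \<noteq> {}" "J \<subseteq> {1..n}" using J unfolding common_def by auto
  have "positions [1..<n+1] J = {i. Suc i \<in> J}"
    using J_range(2) unfolding positions_def by (auto simp del: upt_Suc)
  moreover have "J = Suc ` {i. Suc i \<in> J}"
  proof (intro equalityI subsetI)
    fix x assume "x \<in> J"
    then show "x \<in> Suc ` {i. Suc i \<in> J}"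
      using J_range(2) by (intro image_eqI[of _ _ "x - 1"]) auto
  qed auto
  ultimately have "J = {Suc a..Suc c}" using ac by simp
  with J_range(1) show thesis using that by (metis atLeastatMost_empty_iff)
qed

lemma not_overlap_atLeastAtMost_comparable:
  fixes a c p q :: nat
  assumes "a \<le> c" "p \<le> q" "\<not> overlap {a..c} {p..q}" "{a..c} \<inter> {p..q} \<noteq> {}"
  shows "{a..c} \<subseteq> {p..q} \<or> {p..q} \<subseteq> {a..c}"
proof -
  have "Min {a..c} = a" "Max {a..c} = c" "Min {p..q} = p" "Max {p..q} = q"
    using assms(1,2) by (auto intro: Min_eqI Max_eqI)
  then show ?thesis using assms(3,4) unfolding overlap_def by auto
qed

lemma strong_comparable:
  assumes pf: "perm_family n Ps" and x: "strong n Ps x" and J: "common n Ps J"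
    and meet: "x \<inter> J \<noteq> {}"
  shows "x \<subseteq> J \<or> J \<subseteq> x"
proof -
  obtain a c where "a \<le> c" "x = {a..c}"
    using common_eq_atLeastAtMost[OF pf strong_imp_common[OF x]] by blast
  moreover obtain p q where "p \<le> q" "J = {p..q}" using common_eq_atLeastAtMost[OF pf J] .
  moreover have "\<not> overlap x J" using x J unfolding strong_def by blast
  ultimately show ?thesis using not_overlap_atLeastAtMost_comparable meet by blast
qed

lemma strong_singleton:
  assumes pf: "perm_family n Ps" and e: "e \<in> {1..n}"
  shows "strong n Ps {e}"
proof -
  have "\<exists>a c. positions P {e} = {a..c}" if P: "P \<in> set Ps" for P
  proof -
    have "distinct P" "set P = {1..n}" using P pf unfolding perm_family_def by auto
    moreover obtain i where "i < length P" "P ! i = e"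
      using e \<open>set P = {1..n}\<close> by (metis in_set_conv_nth)
    ultimately have "positions P {e} = {i..i}"
      unfolding positions_def using nth_eq_iff_index_eq by fastforce
    then show ?thesis by blast
  qed
  then have "common n Ps {e}" using e unfolding common_def by auto
  then show ?thesis unfolding strong_def overlap_def by auto
qed

lemma strong_full:
  assumes pf: "perm_family n Ps"
  shows "strong n Ps {1..n}"
proof -
  have n: "1 \<le> n" using pf unfolding perm_family_def by blast
  have "positions P {1..n} = {0..n - 1}" if P: "P \<in> set Ps" for P
  proof -
    have "distinct P" "set P = {1..n}" using P pf unfolding perm_family_def by auto
    then have "length P = n" by (metis card_atLeastAtMost diff_Suc_1 distinct_card)
    then show ?thesis using \<open>set P = {1..n}\<close> n nth_mem unfolding positions_def by fastforce
  qed
  then have "common n Ps {1..n}" using n unfolding common_def by fastforce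
  moreover have "\<not> overlap {1..n} J" if J: "common n Ps J" for J
  proof -
    have "finite J" "J \<noteq> {}" "J \<subseteq> {1..n}" using J common_finite unfolding common_def by auto
    then have "1 \<le> Min J" "Max J \<le> n" using Min_in Max_in by fastforce+
    moreover have "Min {1..n} = 1" "Max {1..n} = n" using n by (auto intro: Min_eqI Max_eqI)
    ultimately show ?thesis unfolding overlap_def by auto
  qed
  ultimately show ?thesis unfolding strong_def by blast
qed

lemma least_strong_superset:
  assumes pf: "perm_family n Ps" and I: "common n Ps I"
  obtains z where "strong n Ps z" and "I \<subseteq> z"
    and "\<And>w. strong n Ps w \<Longrightarrow> I \<subseteq> w \<Longrightarrow> z \<subseteq> w"
proof -
  let ?S = "{w. strong n Ps w \<and> I \<subseteq> w}"
  have "?S \<subseteq> Pow {1..n}" using strong_imp_common unfolding common_def by blast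
  then have "finite ?S" by (rule finite_subset) simp
  moreover have "{1..n} \<in> ?S" using strong_full[OF pf] I unfolding common_def by blast
  ultimately obtain z where z: "z \<in> ?S" and z_min: "\<forall>w\<in>?S. w \<subseteq> z \<longrightarrow> z = w"
    using finite_has_minimal[of ?S] by auto
  have z_least: "z \<subseteq> w" if w: "strong n Ps w" "I \<subseteq> w" for w
  proof -
    have "z \<inter> w \<noteq> {}" using z w common_nonempty[OF I] by blast
    then have "z \<subseteq> w \<or> w \<subseteq> z"
      using strong_comparable[OF pf _ strong_imp_common[OF w(1)]] z by blast
    then show ?thesis using z_min w by blast
  qed
  show thesis using z by (intro that[OF _ _ z_least]) auto
qed

lemma childrenD: "y \<in> children n Ps z \<Longrightarrow> strong n Ps y \<and> y \<subset> z"
  unfolding children_def by blast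

lemma finite_children: "finite (children n Ps z)"
proof -
  have "children n Ps z \<subseteq> Pow {1..n}" unfolding children_def strong_def common_def by auto
  then show ?thesis by (rule finite_subset) simp
qed

lemma children_disjoint:
  assumes pf: "perm_family n Ps" and y: "y \<in> children n Ps z" and y': "y' \<in> children n Ps z"
    and meet: "y \<inter> y' \<noteq> {}"
  shows "y = y'"
proof (rule ccontr)
  assume "y \<noteq> y'"
  moreover have "y \<subseteq> y' \<or> y' \<subseteq> y"
    using strong_comparable[OF pf _ strong_imp_common meet] childrenD[OF y] childrenD[OF y']
    by blast
  ultimately have "y \<subset> y' \<or> y' \<subset> y" by blast
  then have "z \<subseteq> y' \<or> z \<subseteq> y"
    using y y' unfolding children_def by blast
  then show False using childrenD[OF y] childrenD[OF y'] by blast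
qed

lemma Union_children:
  assumes pf: "perm_family n Ps" and z: "strong n Ps z" and not_leaf: "\<And>e. z \<noteq> {e}"
  shows "\<Union>(children n Ps z) = z"
proof
  show "\<Union>(children n Ps z) \<subseteq> z" using childrenD by blast
  show "z \<subseteq> \<Union>(children n Ps z)"
  proof
    fix e assume e: "e \<in> z"
    let ?S = "{w. strong n Ps w \<and> w \<subset> z \<and> e \<in> w}"
    have "e \<in> {1..n}" using e strong_imp_common[OF z] unfolding common_def by blast
    then have "{e} \<in> ?S" using strong_singleton[OF pf] e not_leaf[of e] by blast
    moreover have "?S \<subseteq> Pow z" by auto
    then have "finite ?S"
      using common_finite[OF strong_imp_common[OF z]] by (simp add: finite_subset)
    ultimately obtain y where y: "y \<in> ?S" and y_max: "\<forall>w\<in>?S. y \<subseteq> w \<longrightarrow> y = w"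
      using finite_has_maximal[of ?S] by auto
    have "z \<subseteq> w" if w: "strong n Ps w" "y \<subset> w" for w
    proof -
      have "z \<subseteq> w \<or> w \<subseteq> z"
        using strong_comparable[OF pf z strong_imp_common[OF w(1)]] w y by blast
      then show ?thesis using y y_max w by blast
    qed
    then have "y \<in> children n Ps z" using y unfolding children_def by blast
    then show "e \<in> \<Union>(children n Ps z)" using y by blast
  qed
qed

text \<open>The domain of a non-strong common interval I is the set of children of its least
  strong superset z that meet I.\<close>

lemma nonstrong_common_Q_run:
  assumes pf: "perm_family n Ps" and I: "common n Ps I" and not_strong: "\<not> strong n Ps I"
  shows "\<exists>z D. Q_node n Ps z \<and> consecutive_children n Ps z D \<and> \<Union>D = I"
proof -
  obtain z where z: "strong n Ps z" "I \<subseteq> z"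
    and z_least: "\<And>w. strong n Ps w \<Longrightarrow> I \<subseteq> w \<Longrightarrow> z \<subseteq> w"
    using least_strong_superset[OF pf I] by blast
  have I_ne: "I \<noteq> {}" using I unfolding common_def by blast
  have "z \<noteq> I" using z not_strong by blast
  then have not_leaf: "z \<noteq> {e}" for e using z(2) I_ne by blast
  define D where "D = {y \<in> children n Ps z. y \<inter> I \<noteq> {}}"
  have D_children: "D \<subseteq> children n Ps z" unfolding D_def by blast
  have D_sub: "y \<subseteq> I" if "y \<in> D" for y
  proof -
    have y: "y \<in> children n Ps z" "y \<inter> I \<noteq> {}" using that unfolding D_def by auto
    have "\<not> I \<subseteq> y" using z_least[of y] childrenD[OF y(1)] by blast
    then show ?thesis using strong_comparable[OF pf _ I y(2)] childrenD[OF y(1)] by blast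
  qed
  have Union_D: "\<Union>D = I"
  proof
    show "\<Union>D \<subseteq> I" using D_sub by blast
    show "I \<subseteq> \<Union>D" using z(2) Union_children[OF pf z(1) not_leaf] unfolding D_def by blast
  qed
  have "D \<noteq> children n Ps z"
    using Union_D Union_children[OF pf z(1) not_leaf] \<open>z \<noteq> I\<close> by blast
  then have card_less: "card D < card (children n Ps z)"
    using D_children by (simp add: finite_children psubset_card_mono)
  have "card D \<noteq> 1"
    using Union_D not_strong childrenD D_children by (auto simp: card_1_singleton_iff)
  moreover have "card D \<noteq> 0"
    using Union_D I_ne finite_subset[OF D_children finite_children] by auto
  ultimately have two: "2 \<le> card D" by linarith
  have "Q_node n Ps z"
    unfolding Q_node_def P_node_def using z(1) D_children card_less two Union_D I by blast
  moreover have "consecutive_children n Ps z D"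
    unfolding consecutive_children_def
  proof (intro conjI ballI impI D_children)
    show "D \<noteq> {}" using Union_D I_ne by blast
    fix y1 y2 y assume y1: "y1 \<in> D" and y2: "y2 \<in> D" and y: "y \<in> children n Ps z"
      and between: "Min y1 \<le> Min y \<and> Min y \<le> Min y2"
    have nonempty: "finite u \<and> u \<noteq> {}" if "u \<in> children n Ps z" for u
      using childrenD[OF that] strong_imp_common common_finite common_nonempty by blast
    obtain a c where "I = {a..c}" using common_eq_atLeastAtMost[OF pf I] .
    moreover have "Min y1 \<in> I" "Min y2 \<in> I"
      using y1 y2 D_sub D_children nonempty Min_in by blast+
    ultimately have "Min y \<in> I" using between by auto
    then show "y \<in> D" using y nonempty[OF y] Min_in unfolding D_def by blast
  qed
  ultimately show ?thesis using Union_D by blast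
qed

lemma run_parent_least:
  assumes pf: "perm_family n Ps" and not_strong: "\<not> strong n Ps I"
    and z: "strong n Ps z" and D: "D \<noteq> {}" "D \<subseteq> children n Ps z" "\<Union>D = I"
    and w: "strong n Ps w" "I \<subseteq> w"
  shows "z \<subseteq> w"
proof -
  obtain y where y: "y \<in> D" using D(1) by blast
  then have y_child: "y \<in> children n Ps z" using D(2) by blast
  then have "y \<noteq> {}" using childrenD strong_imp_common common_nonempty by blast
  then have meet: "z \<inter> w \<noteq> {}" using y y_child childrenD D(3) w(2) by blast
  have "y \<subseteq> I" using y D(3) by blast
  then have "y \<subseteq> w" "y \<noteq> w" using w not_strong by (blast, metis subset_antisym)
  then have "\<not> w \<subset> z" using y_child w(1) unfolding children_def by blast
  moreover have "w \<subseteq> z \<or> z \<subseteq> w"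
    using strong_comparable[OF pf w(1) strong_imp_common[OF z]] meet by blast
  ultimately show ?thesis by blast
qed

lemma children_subsets_Union_eq:
  assumes pf: "perm_family n Ps"
    and D1: "D1 \<subseteq> children n Ps z" and D2: "D2 \<subseteq> children n Ps z" and eq: "\<Union>D1 = \<Union>D2"
  shows "D1 = D2"
proof -
  have sub: "D \<subseteq> D'"
    if D: "D \<subseteq> children n Ps z" "D' \<subseteq> children n Ps z" "\<Union>D = \<Union>D'" for D D'
  proof
    fix y assume y: "y \<in> D"
    then have "y \<noteq> {}" using D childrenD strong_imp_common common_nonempty by blast
    then obtain y' where "y' \<in> D'" "y \<inter> y' \<noteq> {}" using y D(3) by blast
    then show "y \<in> D'" using children_disjoint[OF pf, of y z y'] y D by blast
  qed
  show ?thesis using sub[OF D1 D2 eq] sub[OF D2 D1 eq[symmetric]] by (rule equalityI)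
qed

lemma domain_nonstrong:
  assumes pf: "perm_family n Ps" and not_strong: "\<not> strong n Ps I"
    and run: "Q_node n Ps z" "consecutive_children n Ps z D" "\<Union>D = I"
  shows "domain n Ps I = D"
  unfolding domain_def if_not_P[OF not_strong]
proof (rule the_equality)
  show "\<exists>z. Q_node n Ps z \<and> consecutive_children n Ps z D \<and> \<Union>D = I" using run by blast
next
  have run_props: "strong n Ps z \<and> D \<noteq> {} \<and> D \<subseteq> children n Ps z \<and> I \<subseteq> z"
    if "Q_node n Ps z" "consecutive_children n Ps z D" "\<Union>D = I" for z D
    using that childrenD unfolding Q_node_def consecutive_children_def by blast
  fix D' assume "\<exists>z'. Q_node n Ps z' \<and> consecutive_children n Ps z' D' \<and> \<Union>D' = I"
  then obtain z' where run': "Q_node n Ps z'" "consecutive_children n Ps z' D'" "\<Union>D' = I"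
    by blast
  note props = run_props[OF run] run_props[OF run']
  have "z \<subseteq> z'" using run_parent_least[OF pf not_strong _ _ _ run(3)] props by blast
  moreover have "z' \<subseteq> z" using run_parent_least[OF pf not_strong _ _ _ run'(3)] props by blast
  ultimately have "D \<subseteq> children n Ps z'" using props by simp
  then show "D' = D"
    using children_subsets_Union_eq[OF pf] props run(3) run'(3) by metis
qed

lemma domain_strong_subset:
  assumes pf: "perm_family n Ps" and I: "common n Ps I" and x: "x \<in> domain n Ps I"
  shows "strong n Ps x \<and> x \<subseteq> I"
proof (cases "strong n Ps I")
  case True
  then have "x \<in> children n Ps I" using x unfolding domain_def by simp
  then show ?thesis using childrenD by blast
next
  case False
  then obtain z D where run: "Q_node n Ps z" "consecutive_children n Ps z D" "\<Union>D = I"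
    using nonstrong_common_Q_run[OF pf I] by blast
  then have "x \<in> D" using x domain_nonstrong[OF pf False run] by simp
  then show ?thesis using run childrenD unfolding consecutive_children_def by blast
qed

lemma nested_common: "nested n Ps b J \<Longrightarrow> common n Ps J"
  by (induction rule: nested.induct) auto

lemma nested_strong_subset:
  assumes "nested n Ps b J" and "perm_family n Ps"
    and "strong n Ps x" and "x \<subseteq> J" and "b < card x"
  shows "nested n Ps b x"
  using assms
proof (induction rule: nested.induct)
  case (single n Ps I b)
  then have "card x \<le> 1" using common_finite card_mono by metis
  then have "card x = 1" using single.prems(4) by linarith
  then show ?case using nested.single strong_imp_common[OF single.prems(2)] by blast
next
  case (step n Ps I b J)
  have fin: "finite I" and x_card: "card x \<le> card I"
    using step.hyps(1) step.prems(3) common_finite card_mono by blast+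
  consider "x \<subseteq> J" | "x \<inter> J = {}" | "x \<inter> J \<noteq> {}" "\<not> x \<subseteq> J" by blast
  then show ?case
  proof cases
    case 1
    then show ?thesis using step.IH step.prems by blast
  next
    case 2
    then have "J \<subseteq> I - x" using step.hyps(3) by blast
    then have "card J \<le> card I - card x"
      using card_mono[OF finite_Diff[OF fin]] card_Diff_subset[OF finite_subset] fin step.prems(3)
      by metis
    then show ?thesis using step.hyps(4) step.prems(4) x_card by linarith
  next
    case 3
    then have "J \<subset> x"
      using strong_comparable[OF step.prems(1,2) nested_common[OF step.hyps(2)]] by blast
    moreover have "common n Ps x" using strong_imp_common[OF step.prems(2)] .
    ultimately show ?thesis
      using nested.step[OF _ step.hyps(2)] step.hyps(4) x_card by simp
  qed
qed

theorem lemma1: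
  fixes n b :: nat and Ps :: "nat list list" and I :: "nat set"
  assumes "perm_family n Ps"
    and "b > 0"
    and "nested n Ps b I"
    and "domain n Ps I \<noteq> {}"
  shows "\<forall>x\<in>domain n Ps I. small b x \<or> nested n Ps b x"
proof
  fix x assume "x \<in> domain n Ps I"
  then have "strong n Ps x" "x \<subseteq> I"
    using domain_strong_subset[OF assms(1) nested_common[OF assms(3)]] by blast+
  then show "small b x \<or> nested n Ps b x"
    using nested_strong_subset[OF assms(3,1)] unfolding small_def by (meson not_le)
qed

end
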